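(* Fix a cut and project scheme $(\mathbb{R}^n, \mathbb{R}^m, \mathcal{L})$ as described in the context. Let $W, W' \subset \mathbb{R}^m$ be windows (compact sets with $W=\overline{W^\circ}$, $W'=\overline{W'^\circ}$, non-empty interior, and boundaries of Lebesgue measure $0$), and let $\varLambda = t + \curlywedge(W)$ and $\varLambda' = t' + \curlywedge(W')$ for some $t,t'\in\mathbb{R}^n$ be the corresponding regular model sets. Then $\varLambda$ and $\varLambda'$ are homometric if and only if $W$ and $W'$ have the same covariogram, i.e. $g^{}_{W}(y) = g^{}_{W'}(y)$ for all $y \in \mathbb{R}^m$.
   Context: A cut and project scheme consists of $\mathbb{R}^n$ (direct space), $\mathbb{R}^m$ (internal space), the canonical projections $\pi:\mathbb{R}^n\times\mathbb{R}^m\to\mathbb{R}^n$ and $\pi_{\mathrm{int}}:\mathbb{R}^n\times\mathbb{R}^m\to\mathbb{R}^m$, and a lattice $\mathcal{L}\subset\mathbb{R}^{n+m}$ such that $\pi|_{\mathcal{L}}$ is injective and $L^\star := \pi_{\mathrm{int}}(\mathcal{L})$ is dense in $\mathbb{R}^m$. With $L=\pi(\mathcal{L})$, the $\star$-map $L\to L^\star$ is $x^\star = \pi_{\mathrm{int}}((\pi|_{\mathcal{L}})^{-1}(x))$. For a window $W\subset\mathbb{R}^m$, $\curlywedge(W) := \{x\in L \mid x^\star\in W\}$; a (regular) model set is $\varLambda = t+\curlywedge(W)$ with $t\in\mathbb{R}^n$ and $W$ compact, $W=\overline{W^\circ}$ with non-empty interior, and $\partial W$ of Lebesgue measure $0$.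 The covariogram of a compact set $K\subset\mathbb{R}^m$ is $g^{}_K(y) = \mathrm{vol}(K\cap(y+K))$. The autocorrelation of a Delone set $\varLambda\subset\mathbb{R}^n$ is the measure $\gamma^{}_\varLambda = \lim_{r\to\infty} \frac{1}{\mathrm{vol}(B_r)} \delta_{\varLambda\cap B_r} * \delta_{-\varLambda\cap B_r}$ (vague limit), where $B_r$ is the open ball of radius $r$ about $0$ and $\delta_S=\sum_{x\in S}\delta_x$; for model sets this limit exists (and is independent of the averaging van Hove sequence). Two Delone sets are called homometric if they have the same autocorrelation measure. *)

theory Defs
  imports "HOL-Analysis.Analysis"
begin

definition is_lattice :: "'c::euclidean_space set \<Rightarrow> bool" where
  "is_lattice L \<longleftrightarrow> (\<exists>B. independent B \<and> span B = UNIV \<and>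
      L = {(\<Sum>b\<in>B. of_int (c b) *\<^sub>R b) | c. True})"

(* Cut and project scheme with direct space 'a, internal space 'b, lattice L
  in 'a \<times> 'b; \<pi> = fst, \<pi>_int = snd. *)
definition cut_project_scheme :: "('a::euclidean_space \<times> 'b::euclidean_space) set \<Rightarrow> bool" where
  "cut_project_scheme L \<longleftrightarrow> is_lattice L \<and> inj_on fst L \<and> closure (snd ` L) = UNIV"

definition star_map :: "('a \<times> 'b) set \<Rightarrow> 'a \<Rightarrow> 'b" where
  "star_map L x = snd (the_inv_into L fst x)"

definition cp_set :: "('a \<times> 'b) set \<Rightarrow> 'b set \<Rightarrow> 'a set" where
  "cp_set L W = {x \<in> fst ` L. star_map L x \<in> W}"

definition window :: "'b::euclidean_space set \<Rightarrow> bool" where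
  "window W \<longleftrightarrow> compact W \<and> closure (interior W) = W \<and> interior W \<noteq> {} \<and>
      frontier W \<in> null_sets lebesgue"

definition covariogram :: "'b::euclidean_space set \<Rightarrow> 'b \<Rightarrow> real" where
  "covariogram K y = measure lebesgue (K \<inter> ((+) y ` K))"

(* Approximant (1/vol B_r) (\<delta>_{\<Lambda>\<inter>B_r} * \<delta>_{-\<Lambda>\<inter>B_r}) applied to a test function f. *)
definition autocorr_approx :: "'a::euclidean_space set \<Rightarrow> real \<Rightarrow> ('a \<Rightarrow> real) \<Rightarrow> real" where
  "autocorr_approx \<Lambda> r f =
     (\<Sum>x\<in>\<Lambda> \<inter> ball 0 r. \<Sum>y\<in>\<Lambda> \<inter> ball 0 r. f (x - y)) / measure lebesgue (ball (0::'a) r)"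

definition Cc :: "('a::euclidean_space \<Rightarrow> real) set" where
  "Cc = {f. continuous_on UNIV f \<and> compact (closure {x. f x \<noteq> 0})}"

(* \<gamma> (a functional on C_c, i.e. a Radon measure) is the autocorrelation of \<Lambda>:
  vague limit of the approximants as r \<rightarrow> \<infinity>. *)
definition has_autocorrelation :: "'a::euclidean_space set \<Rightarrow> (('a \<Rightarrow> real) \<Rightarrow> real) \<Rightarrow> bool" where
  "has_autocorrelation \<Lambda> \<gamma> \<longleftrightarrow> (\<forall>f\<in>Cc. ((\<lambda>r. autocorr_approx \<Lambda> r f) \<longlongrightarrow> \<gamma> f) at_top)"

definition homometric :: "'a::euclidean_space set \<Rightarrow> 'a set \<Rightarrow> bool" where
  "homometric \<Lambda> \<Lambda>' \<longleftrightarrow> (\<exists>\<gamma>. has_autocorrelation \<Lambda> \<gamma> \<and> has_autocorrelation \<Lambda>' \<gamma>)"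

end

theory Submission
  imports Defs
begin

text \<open>
  By uniform distribution of model sets, among the points of \<open>t + \<curlywedge>(W)\<close> in a large ball \<open>B\<^sub>r\<close>
  the number of pairs with difference \<open>x \<in> L\<close> is asymptotically
  \<open>vol B\<^sub>r * vol (W \<inter> (x\<^sup>\<star> + W)) / covol L = vol B\<^sub>r * g\<^sub>W (x\<^sup>\<star>) / covol L\<close>.
  Hence the autocorrelation is the pure point measure \<open>(1 / covol L) \<Sum>x\<in>L. g\<^sub>W (x\<^sup>\<star>) \<delta>\<^sub>x\<close>,
  which does not depend on \<open>t\<close>. The counting is done by comparing lattice points with volumes,
  using fundamental domains of \<open>L\<close> that are arbitrarily thin in the internal direction (they exist
  because \<open>L\<^sup>\<star>\<close> is dense) and inner and outer parallel sets of \<open>W\<close> (whose volumes tend to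
  \<open>vol W\<close> because \<open>\<partial>W\<close> is null). Conversely, testing this measure against bump functions that
  isolate a single point of the discrete set \<open>\<pi>(L)\<close> recovers \<open>g\<^sub>W\<close> on the dense set \<open>L\<^sup>\<star>\<close>,
  hence everywhere, since covariograms are continuous.
\<close>

section \<open>Lattices and fundamental domains\<close>

lemma representation_sum_scale:
  assumes "finite B" "independent B" "b \<in> B"
  shows "representation B (\<Sum>b'\<in>B. c b' *\<^sub>R b') b = c b"
proof -
  have "representation B (\<Sum>b'\<in>B. c b' *\<^sub>R b') b = (\<Sum>b'\<in>B. c b' * representation B b' b)"
    using assms by (simp add: real_vector.representation_sum real_vector.representation_scale
        real_vector.span_base real_vector.span_scale)
  also have "\<dots> = c b"
    using assms by (simp add: real_vector.representation_basis if_distrib cong: if_cong)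
  finally show ?thesis .
qed

lemma is_latticeE:
  fixes L :: "'c::euclidean_space set"
  assumes "is_lattice L"
  obtains B where "finite B" "independent B" "span B = UNIV"
    "\<And>x. x \<in> L \<longleftrightarrow> (\<forall>b\<in>B. representation B x b \<in> \<int>)"
proof -
  obtain B where B: "independent B" "span B = UNIV"
     "L = {(\<Sum>b\<in>B. of_int (c b) *\<^sub>R b) | c. True}"
    using assms unfolding is_lattice_def by blast
  have fin: "finite B" using B(1) by (rule eucl.finiteI_independent)
  have "x \<in> L \<longleftrightarrow> (\<forall>b\<in>B. representation B x b \<in> \<int>)" for x
  proof
    assume "x \<in> L"
    then show "\<forall>b\<in>B. representation B x b \<in> \<int>" using B(1,3) fin by (auto simp: representation_sum_scale)
  next
    assume int: "\<forall>b\<in>B. representation B x b \<in> \<int>"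
    have "x = (\<Sum>b\<in>B. representation B x b *\<^sub>R b)"
      using B fin by (simp add: real_vector.sum_representation_eq)
    also have "\<dots> = (\<Sum>b\<in>B. of_int \<lfloor>representation B x b\<rfloor> *\<^sub>R b)"
      using int by (intro sum.cong refl) auto
    finally show "x \<in> L" using B(3) by auto
  qed
  then show ?thesis using that fin B(1,2) by blast
qed

lemma lattice_zero: "is_lattice L \<Longrightarrow> 0 \<in> L"
  by (erule is_latticeE) (simp add: real_vector.representation_zero)

lemma lattice_diff: "is_lattice L \<Longrightarrow> x \<in> L \<Longrightarrow> y \<in> L \<Longrightarrow> x - y \<in> L"
  by (erule is_latticeE) (simp add: real_vector.representation_diff)

lemma lattice_minus: "is_lattice L \<Longrightarrow> x \<in> L \<Longrightarrow> - x \<in> L"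
  using lattice_diff[of L 0 x] lattice_zero[of L] by simp

lemma lattice_add: "is_lattice L \<Longrightarrow> x \<in> L \<Longrightarrow> y \<in> L \<Longrightarrow> x + y \<in> L"
  using lattice_diff[of L x "- y"] lattice_minus[of L y] by simp

definition fundamental_domain :: "'c::euclidean_space set \<Rightarrow> 'c set \<Rightarrow> bool" where
  "fundamental_domain L F \<longleftrightarrow> F \<in> sets lebesgue \<and> bounded F \<and> (\<forall>x. \<exists>l\<in>L. x - l \<in> F) \<and>
     (\<forall>l\<in>L. \<forall>l'\<in>L. \<forall>f\<in>F. \<forall>f'\<in>F. l + f = l' + f' \<longrightarrow> l = l')"

lemma fundamental_domainD:
  assumes "fundamental_domain L F"
  shows "F \<in> sets lebesgue" "bounded F" "\<exists>l\<in>L. x - l \<in> F"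
    "l \<in> L \<Longrightarrow> l' \<in> L \<Longrightarrow> f \<in> F \<Longrightarrow> f' \<in> F \<Longrightarrow> l + f = l' + f' \<Longrightarrow> l = l'"
  using assms unfolding fundamental_domain_def by blast+

definition fundamental_parallelepiped :: "'c::euclidean_space set \<Rightarrow> 'c set" where
  "fundamental_parallelepiped B = {x. \<forall>b\<in>B. representation B x b \<in> {0..<1}}"

context
  fixes B :: "'c::euclidean_space set"
  assumes B: "finite B" "independent B" "span B = UNIV"
begin

lemma continuous_representation: "continuous_on UNIV (\<lambda>x. representation B x b)"
  using bounded_linear_representation[OF B(2,3)] by (intro linear_continuous_on)

lemma fundamental_parallelepiped_borel: "fundamental_parallelepiped B \<in> sets borel"
proof -
  have [measurable]: "(\<lambda>x. representation B x b) \<in> borel_measurable borel" for b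
    by (intro borel_measurable_continuous_onI continuous_representation)
  show ?thesis
    unfolding fundamental_parallelepiped_def using B(1) by measurable
qed

lemma bounded_fundamental_parallelepiped: "bounded (fundamental_parallelepiped B)"
  unfolding bounded_iff
proof (intro exI ballI)
  fix x assume x: "x \<in> fundamental_parallelepiped B"
  have "norm x = norm (\<Sum>b\<in>B. representation B x b *\<^sub>R b)"
    using B by (simp add: real_vector.sum_representation_eq)
  also have "\<dots> \<le> (\<Sum>b\<in>B. \<bar>representation B x b\<bar> * norm b)"
    by (rule norm_sum[THEN order_trans]) simp
  also have "\<dots> \<le> (\<Sum>b\<in>B. norm b)"
    using x by (intro sum_mono mult_left_le_one_le) (auto simp: fundamental_parallelepiped_def)
  finally show "norm x \<le> (\<Sum>b\<in>B. norm b)" .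
qed

lemma measure_fundamental_parallelepiped_pos: "0 < measure lebesgue (fundamental_parallelepiped B)"
proof -
  define U where "U = (\<Inter>b\<in>B. (\<lambda>x. representation B x b) -` {0<..<1})"
  define p where "p = (\<Sum>b\<in>B. (1/2::real) *\<^sub>R b)"
  have "open U"
    unfolding U_def using B(1)
    by (intro open_INT ballI open_vimage continuous_representation) auto
  moreover have "p \<in> U"
    using B by (simp add: U_def p_def representation_sum_scale)
  ultimately obtain e where e: "e > 0" "ball p e \<subseteq> U"
    by (meson open_contains_ball)
  have "U \<subseteq> fundamental_parallelepiped B"
    by (auto simp: U_def fundamental_parallelepiped_def)
  have "0 < measure lebesgue (ball p e)"
    using e(1) by simp
  also have "\<dots> \<le> measure lebesgue (fundamental_parallelepiped B)"
    using e(2) \<open>U \<subseteq> _\<close> fundamental_parallelepiped_borel bounded_fundamental_parallelepiped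
    by (intro measure_mono_fmeasurable bounded_set_imp_lmeasurable) auto
  finally show ?thesis .
qed

lemma fundamental_parallelepiped_translates_disjoint:
  assumes L: "\<And>x. x \<in> L \<longleftrightarrow> (\<forall>b\<in>B. representation B x b \<in> \<int>)"
    and "l \<in> L" "l' \<in> L" "f \<in> fundamental_parallelepiped B" "f' \<in> fundamental_parallelepiped B"
    and "l + f = l' + f'"
  shows "l = l'"
proof -
  let ?r = "\<lambda>x b. representation B x b"
  have diff: "?r (x - y) b = ?r x b - ?r y b" for x y b
    using B by (simp add: real_vector.representation_diff)
  have "?r (l - l') b = 0" if "b \<in> B" for b
  proof -
    have "?r (l - l') b \<in> \<int>"
      using assms(2,3) L that by (simp add: diff Ints_diff)
    then obtain z where z: "?r (l - l') b = of_int z"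
      by (auto elim: Ints_cases)
    have "l - l' = f' - f"
      using \<open>l + f = l' + f'\<close> by (simp add: algebra_simps)
    moreover have "?r f b \<in> {0..<1}" "?r f' b \<in> {0..<1}"
      using that assms(4,5) by (auto simp: fundamental_parallelepiped_def)
    ultimately have "\<bar>of_int z\<bar> < (1::real)"
      using z by (auto simp: diff)
    then show ?thesis using z by (simp add: abs_less_iff)
  qed
  then have "l - l' = (\<Sum>b\<in>B. 0 *\<^sub>R b)"
    using B by (subst real_vector.sum_representation_eq[symmetric, of B "l - l'"]) auto
  then show "l = l'" by simp
qed

lemma fundamental_domain_fundamental_parallelepiped:
  assumes L: "\<And>x. x \<in> L \<longleftrightarrow> (\<forall>b\<in>B. representation B x b \<in> \<int>)"
  shows "fundamental_domain L (fundamental_parallelepiped B)"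
proof -
  let ?r = "\<lambda>x b. representation B x b"
  have "\<exists>l\<in>L. x - l \<in> fundamental_parallelepiped B" for x
  proof
    define l where "l = (\<Sum>b\<in>B. of_int \<lfloor>?r x b\<rfloor> *\<^sub>R b)"
    have rl: "?r l b = of_int \<lfloor>?r x b\<rfloor>" if "b \<in> B" for b
      using B that by (simp add: l_def representation_sum_scale)
    show "l \<in> L" using L rl by auto
    show "x - l \<in> fundamental_parallelepiped B"
      using B rl by (simp add: fundamental_parallelepiped_def real_vector.representation_diff floor_less_cancel)
  qed
  then show ?thesis
    using fundamental_parallelepiped_borel bounded_fundamental_parallelepiped
      fundamental_parallelepiped_translates_disjoint[OF L]
    by (auto simp: fundamental_domain_def)
qed

end

lemma is_lattice_fundamental_domain:
  fixes L :: "'c::euclidean_space set"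
  assumes "is_lattice L"
  obtains F where "fundamental_domain L F" "0 < measure lebesgue F"
proof -
  obtain B where "finite B" "independent B" "span B = UNIV"
    and "\<And>x. x \<in> L \<longleftrightarrow> (\<forall>b\<in>B. representation B x b \<in> \<int>)"
    using assms by (rule is_latticeE) blast
  then show ?thesis
    using that fundamental_domain_fundamental_parallelepiped measure_fundamental_parallelepiped_pos
    by blast
qed

lemma fmeasurable_translation_fundamental_domain:
  "fundamental_domain L F \<Longrightarrow> (+) a ` F \<in> fmeasurable lebesgue"
  unfolding fundamental_domain_def
  by (intro bounded_set_imp_lmeasurable bounded_translation lebesgue_sets_translation) auto

lemma card_mult_measure_le:
  assumes F: "fundamental_domain L F" and "S \<subseteq> L"
    and Q: "(\<Union>l\<in>S. (+) l ` F) \<subseteq> Q" "Q \<in> fmeasurable lebesgue"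
  shows "card S * measure lebesgue F \<le> measure lebesgue Q"
proof (cases "finite S")
  case True
  have disj: "disjoint_family_on (\<lambda>l. (+) l ` F) S"
    using F \<open>S \<subseteq> L\<close> unfolding disjoint_family_on_def fundamental_domain_def by blast
  have "card S * measure lebesgue F = measure lebesgue (\<Union>l\<in>S. (+) l ` F)"
    using True disj fmeasurable_translation_fundamental_domain[OF F]
    by (subst measure_UNION') (auto simp: measure_translation pairwise_def disjnt_def
        disjoint_family_on_def)
  also have "\<dots> \<le> measure lebesgue Q"
    using True fmeasurable_translation_fundamental_domain[OF F]
    by (intro measure_mono_fmeasurable[OF Q(1) _ Q(2)]) auto
  finally show ?thesis .
qed simp

lemma measure_le_card_mult:
  assumes F: "fundamental_domain L F" and "finite S"
    and Q: "Q \<subseteq> (\<Union>l\<in>S. (+) l ` F)" "Q \<in> sets lebesgue"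
  shows "measure lebesgue Q \<le> card S * measure lebesgue F"
proof -
  have fm: "(\<Union>l\<in>S. (+) l ` F) \<in> fmeasurable lebesgue"
    using \<open>finite S\<close> fmeasurable_translation_fundamental_domain[OF F] by auto
  have "measure lebesgue Q \<le> measure lebesgue (\<Union>l\<in>S. (+) l ` F)"
    by (rule measure_mono_fmeasurable[OF Q fm])
  also have "\<dots> \<le> (\<Sum>l\<in>S. measure lebesgue ((+) l ` F))"
    using \<open>finite S\<close> fmeasurable_translation_fundamental_domain[OF F]
    by (intro measure_UNION_le) auto
  also have "\<dots> = card S * measure lebesgue F"
    by (simp add: measure_translation)
  finally show ?thesis .
qed

lemma finite_lattice_Int_bounded:
  fixes L :: "'c::euclidean_space set"
  assumes "is_lattice L" "bounded S"
  shows "finite (L \<inter> S)"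
proof (rule ccontr)
  assume inf: "infinite (L \<inter> S)"
  obtain F where F: "fundamental_domain L F" "0 < measure lebesgue F"
    using assms(1) by (rule is_lattice_fundamental_domain)
  obtain M where M: "\<forall>x\<in>S. norm x \<le> M" using assms(2) bounded_iff by blast
  obtain M' where M': "\<forall>x\<in>F. norm x \<le> M'" using fundamental_domainD(2)[OF F(1)] bounded_iff by blast
  define Q where "Q = cball (0::'c) (M + M')"
  obtain T where T: "card T = nat \<lceil>measure lebesgue Q / measure lebesgue F\<rceil> + 1" "T \<subseteq> L \<inter> S"
    using infinite_arbitrarily_large[OF inf] by blast
  have "(\<Union>l\<in>T. (+) l ` F) \<subseteq> Q"
    using T(2) M M' by (force simp: Q_def intro: norm_triangle_le)
  then have "card T * measure lebesgue F \<le> measure lebesgue Q"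
    using T(2) by (intro card_mult_measure_le[OF F(1)]) (auto simp: Q_def)
  moreover have "measure lebesgue Q / measure lebesgue F < card T"
    using T(1) real_nat_ceiling_ge[of "measure lebesgue Q / measure lebesgue F"] by linarith
  then have "measure lebesgue Q < card T * measure lebesgue F"
    using F(2) by (simp add: divide_less_eq)
  ultimately show False by simp
qed

section \<open>Parallel sets and volume estimates\<close>

definition thickening :: "'c::metric_space set \<Rightarrow> real \<Rightarrow> 'c set" where
  "thickening V e = (\<Union>v\<in>V. ball v e)"

definition erosion :: "'c::metric_space set \<Rightarrow> real \<Rightarrow> 'c set" where
  "erosion V e = {v. ball v e \<subseteq> V}"

lemma open_thickening: "open (thickening V e)"
  by (auto simp: thickening_def)

lemma closed_erosion: "closed (erosion V e)"
proof -
  have "erosion V e = - (\<Union>u\<in>-V. ball u e)"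
    by (auto simp: erosion_def dist_commute)
  then show ?thesis by auto
qed

lemma subset_thickening: "e > 0 \<Longrightarrow> V \<subseteq> thickening V e"
  by (force simp: thickening_def)

lemma erosion_subset: "e > 0 \<Longrightarrow> erosion V e \<subseteq> V"
  by (auto simp: erosion_def)

lemma bounded_thickening:
  fixes V :: "'c::real_normed_vector set"
  assumes "bounded V"
  shows "bounded (thickening V e)"
proof -
  obtain M where M: "\<forall>x\<in>V. norm x \<le> M" using assms bounded_iff by blast
  have "norm y \<le> M + \<bar>e\<bar>" if y: "y \<in> thickening V e" for y
  proof -
    obtain w where "w \<in> V" "dist w y < e" using y by (auto simp: thickening_def)
    then show ?thesis using M norm_triangle_sub[of y w] by (auto simp: dist_norm norm_minus_commute)
  qed
  then show ?thesis unfolding bounded_iff by blast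
qed

lemma tendsto_measure_thickening:
  fixes V :: "'c::euclidean_space set"
  assumes "bounded V"
  shows "(\<lambda>k. measure lebesgue (thickening V (1 / Suc k))) \<longlonglongrightarrow> measure lebesgue (closure V)"
proof -
  have "(\<Inter>k. thickening V (1 / Suc k)) = closure V"
  proof (intro equalityI subsetI)
    fix x assume x: "x \<in> (\<Inter>k. thickening V (1 / Suc k))"
    show "x \<in> closure V"
      unfolding closure_approachable
    proof (intro allI impI)
      fix e :: real assume "e > 0"
      then obtain k where k: "1 / Suc k < e" using nat_approx_posE by blast
      have "x \<in> thickening V (1 / Suc k)" using x by blast
      then show "\<exists>y\<in>V. dist y x < e" using k by (force simp: thickening_def)
    qed
  next
    fix x assume "x \<in> closure V"
    then show "x \<in> (\<Inter>k. thickening V (1 / Suc k))"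
      by (auto simp: thickening_def closure_approachable)
  qed
  moreover have "(\<lambda>k. measure lebesgue (thickening V (1 / Suc k))) \<longlonglongrightarrow>
      measure lebesgue (\<Inter>k. thickening V (1 / Suc k))"
  proof (rule Lim_measure_decseq)
    show "range (\<lambda>k. thickening V (1 / Suc k)) \<subseteq> sets lebesgue"
      by (auto simp: borel_open open_thickening)
    show "decseq (\<lambda>k. thickening V (1 / Suc k))"
      by (force simp: decseq_def thickening_def frac_le intro: less_le_trans)
    show "emeasure lebesgue (thickening V (1 / Suc k)) \<noteq> \<infinity>" for k
      using fmeasurableD2[OF lmeasurable_open[OF bounded_thickening[OF assms] open_thickening]] by simp
  qed
  ultimately show ?thesis by simp
qed

lemma tendsto_measure_erosion:
  fixes V :: "'c::euclidean_space set"
  assumes "bounded V"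
  shows "(\<lambda>k. measure lebesgue (erosion V (1 / Suc k))) \<longlonglongrightarrow> measure lebesgue (interior V)"
proof -
  have "(\<Union>k. erosion V (1 / Suc k)) = interior V"
  proof (intro equalityI subsetI)
    fix x assume "x \<in> (\<Union>k. erosion V (1 / Suc k))"
    then obtain k where "ball x (1 / Suc k) \<subseteq> V" by (auto simp: erosion_def)
    then show "x \<in> interior V"
      unfolding mem_interior by (intro exI[of _ "1 / Suc k"]) auto
  next
    fix x assume "x \<in> interior V"
    then obtain e where "e > 0" "ball x e \<subseteq> V"
      by (meson open_contains_ball_eq open_interior interior_subset subset_trans)
    moreover obtain k where "1 / Suc k < e" using \<open>e > 0\<close> nat_approx_posE by blast
    ultimately have "ball x (1 / Suc k) \<subseteq> V"
      by (meson less_imp_le order_trans subset_ball)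
    then show "x \<in> (\<Union>k. erosion V (1 / Suc k))"
      by (auto simp: erosion_def)
  qed
  moreover have "(\<lambda>k. measure lebesgue (erosion V (1 / Suc k))) \<longlonglongrightarrow>
      measure lebesgue (\<Union>k. erosion V (1 / Suc k))"
  proof (rule Lim_measure_incseq)
    show "range (\<lambda>k. erosion V (1 / Suc k)) \<subseteq> sets lebesgue"
      by (auto simp: borel_closed closed_erosion)
    show "incseq (\<lambda>k. erosion V (1 / Suc k))"
      by (force simp: incseq_def erosion_def frac_le intro: less_le_trans)
    show "emeasure lebesgue (\<Union>k. erosion V (1 / Suc k)) \<noteq> \<infinity>"
      unfolding \<open>_ = interior V\<close> using fmeasurableD2[OF lmeasurable_interior[OF assms]] by simp
  qed
  ultimately show ?thesis by simp
qed

lemma measure_thickening_erosion_approx: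
  fixes V :: "'c::euclidean_space set"
  assumes "bounded V" "negligible (frontier V)" "\<delta> > 0"
  obtains e where "e > 0" "measure lebesgue (thickening V e) \<le> measure lebesgue V + \<delta>"
    "measure lebesgue V - \<delta> \<le> measure lebesgue (erosion V e)"
proof -
  have "(\<lambda>k. measure lebesgue (thickening V (1 / Suc k))) \<longlonglongrightarrow> measure lebesgue V"
    using tendsto_measure_thickening[OF assms(1)] measure_closure[OF assms(1,2)] by simp
  moreover have "(\<lambda>k. measure lebesgue (erosion V (1 / Suc k))) \<longlonglongrightarrow> measure lebesgue V"
    using tendsto_measure_erosion[OF assms(1)] measure_interior[OF assms(1,2)] by simp
  ultimately have "eventually (\<lambda>k. measure lebesgue (thickening V (1 / Suc k)) < measure lebesgue V + \<delta> \<and>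
      measure lebesgue V - \<delta> < measure lebesgue (erosion V (1 / Suc k))) sequentially"
    using \<open>\<delta> > 0\<close> by (intro eventually_conj order_tendstoD) auto
  then obtain k where "measure lebesgue (thickening V (1 / Suc k)) < measure lebesgue V + \<delta>"
      "measure lebesgue V - \<delta> < measure lebesgue (erosion V (1 / Suc k))"
    by (auto dest: eventually_happens)
  then show ?thesis by (intro that[of "1 / Suc k"]) auto
qed

lemma sets_borel_Times:
  "A \<in> sets borel \<Longrightarrow> B \<in> sets borel \<Longrightarrow>
    A \<times> B \<in> sets (borel :: ('a::euclidean_space \<times> 'b::euclidean_space) measure)"
  by (metis borel_prod pair_measureI)

lemma measure_lebesgue_Times:
  fixes A :: "'a::euclidean_space set" and B :: "'b::euclidean_space set"
  assumes "A \<in> sets borel" "B \<in> sets borel"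
  shows "measure lebesgue (A \<times> B) = measure lebesgue A * measure lebesgue B"
proof -
  have "A \<times> B \<in> sets borel"
    using assms by (rule sets_borel_Times)
  then have "measure lebesgue (A \<times> B) = measure (lborel \<Otimes>\<^sub>M lborel) (A \<times> B)"
    by (simp add: measure_completion lborel_prod)
  also have "\<dots> = measure lebesgue A * measure lebesgue B"
    using assms by (simp add: measure_def lborel.emeasure_pair_measure_Times enn2real_mult measure_completion)
  finally show ?thesis .
qed

lemma tendsto_measure_ball_ratio:
  "((\<lambda>r. measure lebesgue (ball (s::'a::euclidean_space) (r + b)) / measure lebesgue (ball (0::'a) r))
     \<longlongrightarrow> 1) at_top"
proof -
  have "((\<lambda>r::real. (1 + b / r) ^ DIM('a)) \<longlongrightarrow> (1 + 0) ^ DIM('a)) at_top"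
    by (intro tendsto_intros tendsto_divide_0[OF tendsto_const] filterlim_at_top_imp_at_infinity
        filterlim_ident)
  moreover have "eventually (\<lambda>r. (1 + b / r) ^ DIM('a) =
      measure lebesgue (ball s (r + b)) / measure lebesgue (ball (0::'a) r)) at_top"
    using eventually_gt_at_top[of "\<bar>b\<bar>"]
  proof eventually_elim
    case (elim r)
    then have "(1 + b / r) ^ DIM('a) = (r + b) ^ DIM('a) / r ^ DIM('a)"
      by (simp add: power_divide field_simps)
    also have "\<dots> = measure lebesgue (ball s (r + b)) / measure lebesgue (ball (0::'a) r)"
      using elim content_ball_conv_unit_ball[of "r + b" s] content_ball_conv_unit_ball[of r "0::'a"]
        content_ball_pos[of 1 "0::'a"]
      by (simp add: measure_completion)
    finally show ?case .
  qed
  ultimately show ?thesis by (auto intro: Lim_transform_eventually)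
qed

lemma tendsto_by_approximating_bounds:
  fixes X :: "'x \<Rightarrow> real"
  assumes "\<And>\<delta>. \<delta> > 0 \<Longrightarrow> \<exists>lo up a b. (lo \<longlongrightarrow> a) F \<and> (up \<longlongrightarrow> b) F \<and> \<mu> - \<delta> \<le> a \<and> b \<le> \<mu> + \<delta> \<and>
      eventually (\<lambda>x. lo x \<le> X x \<and> X x \<le> up x) F"
  shows "(X \<longlongrightarrow> \<mu>) F"
proof (rule tendstoI)
  fix \<eta> :: real assume "\<eta> > 0"
  then obtain lo up a b where lim: "(lo \<longlongrightarrow> a) F" "(up \<longlongrightarrow> b) F"
    and ab: "\<mu> - \<eta> / 2 \<le> a" "b \<le> \<mu> + \<eta> / 2"
    and bounds: "eventually (\<lambda>x. lo x \<le> X x \<and> X x \<le> up x) F"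
    using assms[of "\<eta> / 2"] by auto
  have "eventually (\<lambda>x. a - \<eta> / 2 < lo x \<and> up x < b + \<eta> / 2) F"
    using lim \<open>\<eta> > 0\<close> by (intro eventually_conj order_tendstoD) auto
  with bounds show "eventually (\<lambda>x. dist (X x) \<mu> < \<eta>) F"
    by eventually_elim (use ab in \<open>auto simp: dist_real_def abs_less_iff\<close>)
qed

section \<open>Fundamental domains that are thin in the internal space\<close>

context
  fixes L F :: "'c::euclidean_space set" and P :: "nat \<Rightarrow> 'c set" and k :: "nat \<Rightarrow> 'c" and n :: nat
  assumes L: "is_lattice L" and F: "fundamental_domain L F"
    and P: "disjoint_family_on P {..<n}" "(\<Union>i<n. P i) = F" "\<And>i. P i \<in> sets lebesgue"
    and k: "\<And>i. i < n \<Longrightarrow> k i \<in> L"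
begin

lemma regrouped_translates_unique:
  assumes "l \<in> L" "l' \<in> L" "i < n" "j < n" "p \<in> P i" "p' \<in> P j" "l + (k i + p) = l' + (k j + p')"
  shows "l = l' \<and> i = j \<and> p = p'"
proof -
  have "l + k i \<in> L" "l' + k j \<in> L" "p \<in> F" "p' \<in> F"
    using assms lattice_add[OF L] k P(2) by auto
  moreover have "(l + k i) + p = (l' + k j) + p'"
    using assms(7) by (simp add: add.assoc)
  ultimately have sum_eq: "l + k i = l' + k j"
    using fundamental_domainD(4)[OF F] by blast
  then have "p = p'"
    using \<open>(l + k i) + p = (l' + k j) + p'\<close> by simp
  then have "i = j"
    using P(1) assms(3-6) by (auto simp: disjoint_family_on_def)
  then show ?thesis using sum_eq \<open>p = p'\<close> by simp
qed

lemma fundamental_domain_regroup: "fundamental_domain L (\<Union>i<n. (+) (k i) ` P i)"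
  unfolding fundamental_domain_def
proof (intro conjI allI ballI impI)
  show "(\<Union>i<n. (+) (k i) ` P i) \<in> sets lebesgue"
    using P(3) by (intro sets.finite_UN lebesgue_sets_translation) auto
  show "bounded (\<Union>i<n. (+) (k i) ` P i)"
    using fundamental_domainD(2)[OF F] P(2) by (intro bounded_UN ballI bounded_translation)
      (auto intro: bounded_subset)
next
  fix x
  obtain l where l: "l \<in> L" "x - l \<in> F" using fundamental_domainD(3)[OF F] by blast
  then obtain i where i: "i < n" "x - l \<in> P i" using P(2) by auto
  have "x - (l - k i) = k i + (x - l)" by (simp add: algebra_simps)
  then have "x - (l - k i) \<in> (+) (k i) ` P i" using i(2) by simp
  then show "\<exists>l\<in>L. x - l \<in> (\<Union>i<n. (+) (k i) ` P i)"
    using i(1) l(1) k lattice_diff[OF L] by blast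
next
  fix l l' f f' assume "l \<in> L" "l' \<in> L" "f \<in> (\<Union>i<n. (+) (k i) ` P i)" "f' \<in> (\<Union>i<n. (+) (k i) ` P i)"
    "l + f = l' + f'"
  then show "l = l'"
    using regrouped_translates_unique by blast
qed

lemma measure_regroup: "measure lebesgue (\<Union>i<n. (+) (k i) ` P i) = measure lebesgue F"
proof -
  have P_fm: "P i \<in> fmeasurable lebesgue" if "i < n" for i
    using fundamental_domainD(2)[OF F] P that
    by (intro bounded_set_imp_lmeasurable) (auto intro: bounded_subset)
  have "measure lebesgue (\<Union>i<n. (+) (k i) ` P i) = (\<Sum>i<n. measure lebesgue ((+) (k i) ` P i))"
  proof (rule measure_UNION')
    show "pairwise (\<lambda>i j. disjnt ((+) (k i) ` P i) ((+) (k j) ` P j)) {..<n}"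
      using regrouped_translates_unique[of 0 0] lattice_zero[OF L]
      by (fastforce simp: pairwise_def disjnt_def)
    show "(+) (k i) ` P i \<in> fmeasurable lebesgue" if "i \<in> {..<n}" for i
      using P_fm that by (auto intro: measurable_translation)
  qed simp
  also have "\<dots> = (\<Sum>i<n. measure lebesgue (P i))"
    by (simp add: measure_translation)
  also have "\<dots> = measure lebesgue F"
    unfolding P(2)[symmetric] using P(1) P_fm
    by (intro measure_UNION'[symmetric]) (auto simp: pairwise_def disjnt_def disjoint_family_on_def)
  finally show ?thesis .
qed

end

lemma compact_subset_finite_slabs:
  fixes L C :: "('a::euclidean_space \<times> 'b::euclidean_space) set"
  assumes "closure (snd ` L) = UNIV" "compact C" "\<epsilon> > 0"
  obtains K where "K \<subseteq> L" "finite K" "C \<subseteq> (\<Union>l\<in>K. snd -` ball (snd l) \<epsilon>)"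
proof -
  have "C \<subseteq> (\<Union>l\<in>L. snd -` ball (snd l) \<epsilon>)"
  proof
    fix q :: "'a \<times> 'b"
    have "snd q \<in> closure (snd ` L)" using assms(1) by simp
    then obtain l where "l \<in> L" "dist (snd l) (snd q) < \<epsilon>"
      using \<open>\<epsilon> > 0\<close> unfolding closure_approachable by blast
    then show "q \<in> (\<Union>l\<in>L. snd -` ball (snd l) \<epsilon>)" by auto
  qed
  moreover have "open (snd -` ball (snd l) \<epsilon> :: ('a \<times> 'b) set)" for l :: "'a \<times> 'b"
    by (intro open_vimage open_ball continuous_on_snd continuous_on_id)
  ultimately show ?thesis
    using compactE_image[OF assms(2), of L "\<lambda>l. snd -` ball (snd l) \<epsilon>"] that by metis
qed

lemma thin_fundamental_domain:
  fixes L :: "('a::euclidean_space \<times> 'b::euclidean_space) set"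
  assumes L: "is_lattice L" "closure (snd ` L) = UNIV"
    and F0: "fundamental_domain L F0" and "\<epsilon> > 0"
  obtains F where "fundamental_domain L F" "measure lebesgue F = measure lebesgue F0"
    "\<And>q. q \<in> F \<Longrightarrow> norm (snd q) < \<epsilon>"
proof -
  define U where "U l = (snd -` ball (snd l) \<epsilon> :: ('a \<times> 'b) set)" for l :: "'a \<times> 'b"
  have U_open: "open (U l)" for l
    unfolding U_def by (intro open_vimage open_ball continuous_on_snd continuous_on_id)
  have "compact (closure F0)"
    using fundamental_domainD(2)[OF F0] by (simp add: compact_closure)
  then obtain K where K: "K \<subseteq> L" "finite K" "closure F0 \<subseteq> (\<Union>l\<in>K. U l)"
    unfolding U_def using compact_subset_finite_slabs[OF L(2) _ \<open>\<epsilon> > 0\<close>] by blast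
  obtain k where k: "bij_betw k {0..<card K} K" using ex_bij_betw_nat_finite[OF K(2)] by blast
  define n where "n = card K"
  \<comment> \<open>Each piece of \<open>F0\<close> lies in the internal \<open>\<epsilon>\<close>-slab of a lattice point \<open>k i\<close>, and is then moved by \<open>- k i\<close>.\<close>
  define P where "P i = F0 \<inter> disjointed (\<lambda>i. U (k i)) i" for i
  have "k ` {0..<n} = K"
    using k by (simp add: bij_betw_def n_def)
  then have "(\<Union>i\<in>{0..<n}. U (k i)) = (\<Union>l\<in>K. U l)"
    by (simp add: image_image flip: \<open>k ` {0..<n} = K\<close>)
  then have "(\<Union>i<n. P i) = F0 \<inter> (\<Union>l\<in>K. U l)"
    by (simp add: P_def lessThan_atLeast0 finite_UN_disjointed_eq flip: Int_UN_distrib)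
  also have "\<dots> = F0"
    using K(3) closure_subset[of F0] by blast
  finally have cover: "(\<Union>i<n. P i) = F0" .
  have disj: "disjoint_family_on P {..<n}"
    using disjoint_family_disjointed[of "\<lambda>i. U (k i)"] unfolding disjoint_family_on_def P_def by blast
  have meas: "P i \<in> sets lebesgue" for i
  proof -
    have "range (disjointed (\<lambda>i. U (k i))) \<subseteq> sets borel"
      using borel_open[OF U_open] by (intro sets.range_disjointed_sets) blast
    then show ?thesis
      using fundamental_domainD(1)[OF F0] by (auto simp: P_def)
  qed
  have lattice_k: "- k i \<in> L" if "i < n" for i
    using that \<open>k ` {0..<n} = K\<close> K(1) by (intro lattice_minus[OF L(1)]) auto
  note regroup = L(1) F0 disj cover meas lattice_k
  have "fundamental_domain L (\<Union>i<n. (+) (- k i) ` P i)"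
    by (rule fundamental_domain_regroup[OF regroup])
  moreover have "measure lebesgue (\<Union>i<n. (+) (- k i) ` P i) = measure lebesgue F0"
    by (rule measure_regroup[OF regroup])
  moreover have "norm (snd q) < \<epsilon>" if "q \<in> (\<Union>i<n. (+) (- k i) ` P i)" for q
    using that disjointed_subset by (fastforce simp: P_def U_def dist_norm norm_minus_commute)
  ultimately show ?thesis using that by blast
qed

section \<open>Counting lattice points in windows\<close>

lemma card_window_points_upper:
  fixes L :: "('a::euclidean_space \<times> 'b::euclidean_space) set"
  assumes F: "fundamental_domain L F" "\<And>q. q \<in> F \<Longrightarrow> norm (fst q) \<le> R \<and> norm (snd q) < \<epsilon>"
    and "bounded V"
  shows "card (L \<inter> ball s \<rho> \<times> V) * measure lebesgue F \<le>
    measure lebesgue (ball s (\<rho> + R)) * measure lebesgue (thickening V \<epsilon>)"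
proof -
  let ?Q = "ball s (\<rho> + R) \<times> thickening V \<epsilon>"
  have "l + f \<in> ?Q" if "l \<in> L \<inter> ball s \<rho> \<times> V" "f \<in> F" for l f
  proof -
    have "dist s (fst l + fst f) < \<rho> + R" "dist (snd l) (snd l + snd f) < \<epsilon>"
      using that F(2)[of f] dist_triangle[of s "fst l + fst f" "fst l"] by (auto simp: dist_norm)
    then show ?thesis
      using that by (auto simp: thickening_def mem_Times_iff)
  qed
  then have "(\<Union>l\<in>L \<inter> ball s \<rho> \<times> V. (+) l ` F) \<subseteq> ?Q" by auto
  moreover have "?Q \<in> fmeasurable lebesgue"
    using \<open>bounded V\<close> by (intro lmeasurable_open bounded_Times bounded_ball bounded_thickening
        open_Times open_ball open_thickening)
  ultimately have "card (L \<inter> ball s \<rho> \<times> V) * measure lebesgue F \<le> measure lebesgue ?Q"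
    by (intro card_mult_measure_le[OF F(1)]) auto
  also have "measure lebesgue ?Q = measure lebesgue (ball s (\<rho> + R)) * measure lebesgue (thickening V \<epsilon>)"
    by (intro measure_lebesgue_Times borel_open open_ball open_thickening)
  finally show ?thesis .
qed

lemma card_window_points_lower:
  fixes L :: "('a::euclidean_space \<times> 'b::euclidean_space) set"
  assumes L: "is_lattice L"
    and F: "fundamental_domain L F" "\<And>q. q \<in> F \<Longrightarrow> norm (fst q) \<le> R \<and> norm (snd q) < \<epsilon>"
    and "bounded V"
  shows "measure lebesgue (ball s (\<rho> - R)) * measure lebesgue (erosion V \<epsilon>) \<le>
    card (L \<inter> ball s \<rho> \<times> V) * measure lebesgue F"
proof -
  let ?Q = "ball s (\<rho> - R) \<times> erosion V \<epsilon>"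
  let ?S = "{l\<in>L. \<exists>q\<in>?Q. q - l \<in> F}"
  have S_subset: "?S \<subseteq> L \<inter> ball s \<rho> \<times> V"
  proof
    fix l assume "l \<in> ?S"
    then obtain q where q: "l \<in> L" "q \<in> ?Q" "q - l \<in> F" by blast
    then have "dist s (fst l) < \<rho>" "dist (snd q) (snd l) < \<epsilon>" "ball (snd q) \<epsilon> \<subseteq> V"
      using F(2)[of "q - l"] dist_triangle[of s "fst l" "fst q"]
      by (auto simp: dist_norm erosion_def norm_minus_commute mem_Times_iff)
    then show "l \<in> L \<inter> ball s \<rho> \<times> V" using q(1) by (auto simp: mem_Times_iff)
  qed
  have fin: "finite (L \<inter> ball s \<rho> \<times> V)"
    using L \<open>bounded V\<close> by (intro finite_lattice_Int_bounded bounded_Times bounded_ball)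
  have "?Q \<subseteq> (\<Union>l\<in>?S. (+) l ` F)"
  proof
    fix q assume "q \<in> ?Q"
    obtain l where "l \<in> L" "q - l \<in> F" using fundamental_domainD(3)[OF F(1)] by blast
    then have "l \<in> ?S" "q \<in> (+) l ` F"
      using \<open>q \<in> ?Q\<close> image_eqI[of q "(+) l" "q - l"] by auto
    then show "q \<in> (\<Union>l\<in>?S. (+) l ` F)" by blast
  qed
  moreover have "?Q \<in> sets borel"
    by (intro sets_borel_Times borel_open borel_closed open_ball closed_erosion)
  ultimately have "measure lebesgue ?Q \<le> card ?S * measure lebesgue F"
    using finite_subset[OF S_subset fin] by (intro measure_le_card_mult[OF F(1)]) auto
  also have "\<dots> \<le> card (L \<inter> ball s \<rho> \<times> V) * measure lebesgue F"
    using card_mono[OF fin S_subset] by (intro mult_right_mono) auto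
  finally show ?thesis
    by (simp add: measure_lebesgue_Times borel_closed closed_erosion)
qed

section \<open>Covariograms\<close>

lemma in_translation_iff: "x \<in> (+) y ` A \<longleftrightarrow> x - y \<in> A" for x y :: "'g::ab_group_add"
  by (auto intro: image_eqI[of _ _ "x - y"])

lemma covariogram_nonzero_imp_diff:
  assumes "covariogram W y \<noteq> 0"
  shows "y \<in> {a - b | a b. a \<in> W \<and> b \<in> W}"
proof -
  have "W \<inter> (+) y ` W \<noteq> {}"
    using assms by (auto simp: covariogram_def)
  then obtain w where "w \<in> W" "w \<in> (+) y ` W" by blast
  then show ?thesis by force
qed

lemma negligible_frontier_Int_translation:
  fixes W :: "'b::euclidean_space set"
  assumes "negligible (frontier W)"
  shows "negligible (frontier (W \<inter> (+) y ` W))"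
proof (rule negligible_subset)
  show "negligible (frontier W \<union> (+) y ` frontier W)"
    using assms by (intro negligible_Un negligible_translation)
  show "frontier (W \<inter> (+) y ` W) \<subseteq> frontier W \<union> (+) y ` frontier W"
    using frontier_Int_subset[of W "(+) y ` W"] by (simp add: frontier_translation)
qed

lemma covariogram_bounds:
  fixes W :: "'b::euclidean_space set"
  assumes "compact W" "e > 0" "dist z y < e"
  shows "measure lebesgue (W \<inter> (+) y ` erosion W e) \<le> covariogram W z"
    "covariogram W z \<le> measure lebesgue (W \<inter> (+) y ` thickening W e)"
proof -
  have W: "W \<in> sets lebesgue" "bounded W"
    using assms(1) by (simp_all add: borel_closed compact_imp_closed compact_imp_bounded)
  have fm: "W \<inter> (+) x ` A \<in> fmeasurable lebesgue" if "A \<in> sets lebesgue" for x A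
    using W that by (intro bounded_set_imp_lmeasurable bounded_Int sets.Int lebesgue_sets_translation) auto
  have E: "erosion W e \<in> sets lebesgue" "thickening W e \<in> sets lebesgue"
    by (simp_all add: borel_closed closed_erosion borel_open open_thickening)
  have "W \<inter> (+) y ` erosion W e \<subseteq> W \<inter> (+) z ` W"
  proof
    fix x assume x: "x \<in> W \<inter> (+) y ` erosion W e"
    then have "dist (x - y) (x - z) < e" using assms(3) by (simp add: dist_norm norm_minus_commute)
    with x have "x - z \<in> W" by (auto simp: erosion_def)
    with x show "x \<in> W \<inter> (+) z ` W" by (auto intro: image_eqI[of _ _ "x - z"])
  qed
  then show "measure lebesgue (W \<inter> (+) y ` erosion W e) \<le> covariogram W z"
    unfolding covariogram_def using fmeasurableD[OF fm[OF E(1)]] fm[OF W(1)]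
    by (intro measure_mono_fmeasurable) auto
  have "W \<inter> (+) z ` W \<subseteq> W \<inter> (+) y ` thickening W e"
  proof
    fix x assume x: "x \<in> W \<inter> (+) z ` W"
    then have "dist (x - z) (x - y) < e" using assms(3) by (simp add: dist_norm norm_minus_commute)
    with x have "x - y \<in> thickening W e" by (auto simp: thickening_def)
    with x show "x \<in> W \<inter> (+) y ` thickening W e" by (auto intro: image_eqI[of _ _ "x - y"])
  qed
  then show "covariogram W z \<le> measure lebesgue (W \<inter> (+) y ` thickening W e)"
    unfolding covariogram_def using fmeasurableD[OF fm[OF W(1)]] fm[OF E(2)]
    by (intro measure_mono_fmeasurable) auto
qed

lemma continuous_covariogram:
  fixes W :: "'b::euclidean_space set"
  assumes "compact W" "negligible (frontier W)"
  shows "continuous_on UNIV (covariogram W)"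
  unfolding continuous_on_iff
proof (intro ballI allI impI)
  fix y and \<delta> :: real assume "\<delta> > 0"
  have W: "W \<in> sets lebesgue" "bounded W"
    using assms(1) by (simp_all add: borel_closed compact_imp_closed compact_imp_bounded)
  obtain e where e: "e > 0" "measure lebesgue (thickening W e) \<le> measure lebesgue W + \<delta> / 4"
    "measure lebesgue W - \<delta> / 4 \<le> measure lebesgue (erosion W e)"
    using measure_thickening_erosion_approx[OF W(2) assms(2), of "\<delta> / 4"] \<open>\<delta> > 0\<close> by auto
  let ?T = "thickening W e" and ?E = "erosion W e"
  have T: "?T \<in> fmeasurable lebesgue" "?E \<in> sets lebesgue" "?E \<subseteq> ?T"
    using erosion_subset[OF e(1), of W] subset_thickening[OF e(1), of W]
    by (auto simp: borel_closed closed_erosion intro: lmeasurable_open bounded_thickening W(2) open_thickening)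
  have X: "W \<inter> (+) y ` ?E \<in> fmeasurable lebesgue"
    using W T(2) by (intro bounded_set_imp_lmeasurable bounded_Int sets.Int lebesgue_sets_translation) auto
  have TE: "(+) y ` (?T - ?E) \<in> fmeasurable lebesgue"
    using T by (intro measurable_translation fmeasurable_Diff) auto
  have "W \<inter> (+) y ` ?T \<in> sets lebesgue"
    using W(1) fmeasurableD[OF T(1)] by (intro sets.Int lebesgue_sets_translation)
  then have "measure lebesgue (W \<inter> (+) y ` ?T) \<le> measure lebesgue ((W \<inter> (+) y ` ?E) \<union> (+) y ` (?T - ?E))"
    using X TE by (intro measure_mono_fmeasurable fmeasurable.Un) auto
  also have "\<dots> \<le> measure lebesgue (W \<inter> (+) y ` ?E) + measure lebesgue (?T - ?E)"
    using X TE by (intro order_trans[OF measure_Un_le]) (auto simp: measure_translation intro: fmeasurableD)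
  also have "measure lebesgue (?T - ?E) \<le> \<delta> / 2"
    using measurable_measure_Diff[OF T] e(2,3) by simp
  finally have XY: "measure lebesgue (W \<inter> (+) y ` ?T) \<le> measure lebesgue (W \<inter> (+) y ` ?E) + \<delta> / 2"
    by simp
  show "\<exists>d>0. \<forall>z\<in>UNIV. dist z y < d \<longrightarrow> dist (covariogram W z) (covariogram W y) < \<delta>"
  proof (intro exI[of _ e] conjI ballI impI e(1))
    fix z assume "dist z y < e"
    then show "dist (covariogram W z) (covariogram W y) < \<delta>"
      using covariogram_bounds[OF assms(1) e(1), of z y] covariogram_bounds[OF assms(1) e(1), of y y]
        XY \<open>\<delta> > 0\<close> e(1) by (auto simp: dist_real_def abs_le_iff)
  qed
qed

lemma sum_sum_diff_eq_sum_card: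
  fixes \<phi> :: "'g::ab_group_add \<Rightarrow> real"
  assumes "finite S" "finite D" "\<And>x y. x \<in> S \<Longrightarrow> y \<in> S \<Longrightarrow> \<phi> (x - y) \<noteq> 0 \<Longrightarrow> x - y \<in> D"
  shows "(\<Sum>x\<in>S. \<Sum>y\<in>S. \<phi> (x - y)) = (\<Sum>d\<in>D. \<phi> d * card {x\<in>S. x - d \<in> S})"
proof -
  have "(\<Sum>d\<in>D. \<phi> d * card {x\<in>S. x - d \<in> S}) = (\<Sum>d\<in>D. \<Sum>x\<in>{x\<in>S. x - d \<in> S}. \<phi> d)"
    by (simp add: mult.commute)
  also have "\<dots> = (\<Sum>x\<in>S. \<Sum>d\<in>{d\<in>D. x - d \<in> S}. \<phi> d)"
    using assms(1,2) by (rule sum.swap_restrict[symmetric])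
  also have "\<dots> = (\<Sum>x\<in>S. \<Sum>y\<in>{y\<in>S. x - y \<in> D}. \<phi> (x - y))"
  proof (rule sum.cong[OF refl])
    fix x
    show "(\<Sum>d\<in>{d\<in>D. x - d \<in> S}. \<phi> d) = (\<Sum>y\<in>{y\<in>S. x - y \<in> D}. \<phi> (x - y))"
      by (rule sum.reindex_bij_witness[of _ "\<lambda>y. x - y" "\<lambda>d. x - d"]) auto
  qed
  also have "\<dots> = (\<Sum>x\<in>S. \<Sum>y\<in>S. \<phi> (x - y))"
    using assms by (intro sum.cong refl sum.mono_neutral_left) auto
  finally show ?thesis ..
qed

lemma has_autocorrelation_unique:
  assumes "has_autocorrelation \<Lambda> \<gamma>" "has_autocorrelation \<Lambda> \<gamma>'" "f \<in> Cc"
  shows "\<gamma> f = \<gamma>' f"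
  using assms unfolding has_autocorrelation_def
  by (blast intro: tendsto_unique[OF trivial_limit_at_top_linorder])

lemma homometric_iff_autocorrelations_eq:
  assumes "has_autocorrelation \<Lambda> \<gamma>" "has_autocorrelation \<Lambda>' \<gamma>'"
  shows "homometric \<Lambda> \<Lambda>' \<longleftrightarrow> (\<forall>f\<in>Cc. \<gamma> f = \<gamma>' f)"
proof
  assume "homometric \<Lambda> \<Lambda>'"
  then obtain \<gamma>0 where "has_autocorrelation \<Lambda> \<gamma>0" "has_autocorrelation \<Lambda>' \<gamma>0"
    unfolding homometric_def by blast
  then show "\<forall>f\<in>Cc. \<gamma> f = \<gamma>' f"
    using has_autocorrelation_unique assms by metis
next
  assume "\<forall>f\<in>Cc. \<gamma> f = \<gamma>' f"
  then have "has_autocorrelation \<Lambda>' \<gamma>"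
    using assms(2) by (simp add: has_autocorrelation_def)
  then show "homometric \<Lambda> \<Lambda>'"
    using assms(1) unfolding homometric_def by blast
qed

section \<open>Model sets of a cut and project scheme\<close>

locale cut_and_project =
  fixes L :: "('a::euclidean_space \<times> 'b::euclidean_space) set"
  assumes cut_project_scheme: "cut_project_scheme L"
begin

lemma lattice: "is_lattice L"
  using cut_project_scheme by (simp add: cut_project_scheme_def)

lemma inj_on_fst: "inj_on fst L"
  using cut_project_scheme by (simp add: cut_project_scheme_def)

lemma dense_internal: "closure (snd ` L) = UNIV"
  using cut_project_scheme by (simp add: cut_project_scheme_def)

lemma ex_thin_fundamental_domains:
  "\<exists>c>0. \<forall>\<epsilon>>0. \<exists>F. fundamental_domain L F \<and> measure lebesgue F = c \<and> (\<forall>q\<in>F. norm (snd q) < \<epsilon>)"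
proof -
  obtain F0 where "fundamental_domain L F0" "0 < measure lebesgue F0"
    using lattice by (rule is_lattice_fundamental_domain)
  then show ?thesis
    using thin_fundamental_domain[OF lattice dense_internal] by metis
qed

text \<open>In fact every fundamental domain of \<open>L\<close> has the same measure; only the existence of arbitrarily
  thin ones of a common measure is needed, and that measure is chosen here.\<close>
definition covolume :: real where
  "covolume = (SOME c. c > 0 \<and>
     (\<forall>\<epsilon>>0. \<exists>F. fundamental_domain L F \<and> measure lebesgue F = c \<and> (\<forall>q\<in>F. norm (snd q) < \<epsilon>)))"

lemma covolume_pos: "covolume > 0"
  using someI_ex[OF ex_thin_fundamental_domains] by (simp add: covolume_def)

lemma thin_fundamental_domainE:
  assumes "\<epsilon> > 0"
  obtains F R where "fundamental_domain L F" "measure lebesgue F = covolume"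
    "\<And>q. q \<in> F \<Longrightarrow> norm (fst q) \<le> R \<and> norm (snd q) < \<epsilon>"
proof -
  obtain F where F: "fundamental_domain L F" "measure lebesgue F = covolume" "\<forall>q\<in>F. norm (snd q) < \<epsilon>"
    using someI_ex[OF ex_thin_fundamental_domains] assms unfolding covolume_def by blast
  obtain R where "\<forall>q\<in>F. norm q \<le> R"
    using fundamental_domainD(2)[OF F(1)] bounded_iff by blast
  moreover have "norm (fst q) \<le> norm q" for q :: "'a \<times> 'b"
    using norm_fst_le[of "fst q" "snd q"] by simp
  ultimately have "norm (fst q) \<le> R" if "q \<in> F" for q
    using that order_trans by blast
  then show ?thesis using that F by blast
qed

lemma card_window_points_ratio_bounds:
  assumes F: "fundamental_domain L F" "measure lebesgue F = covolume"
      "\<And>q. q \<in> F \<Longrightarrow> norm (fst q) \<le> R \<and> norm (snd q) < \<epsilon>"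
    and "bounded V" "v > 0"
  shows "measure lebesgue (ball s (\<rho> - R)) / v * (measure lebesgue (erosion V \<epsilon>) / covolume)
      \<le> card (L \<inter> ball s \<rho> \<times> V) / v"
    "card (L \<inter> ball s \<rho> \<times> V) / v
      \<le> measure lebesgue (ball s (\<rho> + R)) / v * (measure lebesgue (thickening V \<epsilon>) / covolume)"
proof -
  let ?N = "real (card (L \<inter> ball s \<rho> \<times> V))"
  have c: "v * covolume > 0" using \<open>v > 0\<close> covolume_pos by simp
  have N: "?N * covolume / (v * covolume) = ?N / v"
    using covolume_pos by simp
  have "measure lebesgue (ball s (\<rho> - R)) * measure lebesgue (erosion V \<epsilon>) / (v * covolume)
      \<le> ?N * covolume / (v * covolume)"
    using card_window_points_lower[OF lattice F(1,3) assms(4)] F(2) c by (intro divide_right_mono) auto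
  then show "measure lebesgue (ball s (\<rho> - R)) / v * (measure lebesgue (erosion V \<epsilon>) / covolume) \<le> ?N / v"
    unfolding N by simp
  have "?N * covolume / (v * covolume)
      \<le> measure lebesgue (ball s (\<rho> + R)) * measure lebesgue (thickening V \<epsilon>) / (v * covolume)"
    using card_window_points_upper[OF F(1,3) assms(4)] F(2) c by (intro divide_right_mono) auto
  then show "?N / v \<le> measure lebesgue (ball s (\<rho> + R)) / v * (measure lebesgue (thickening V \<epsilon>) / covolume)"
    unfolding N by simp
qed

lemma tendsto_card_window_points:
  assumes "bounded V" "negligible (frontier V)"
  shows "((\<lambda>r. card (L \<inter> ball s (r + a) \<times> V) / measure lebesgue (ball (0::'a) r))
    \<longlongrightarrow> measure lebesgue V / covolume) at_top"
proof (rule tendsto_by_approximating_bounds)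
  fix \<delta> :: real assume "\<delta> > 0"
  let ?c = covolume and ?v = "\<lambda>r. measure lebesgue (ball (0::'a) r)" and ?\<mu> = "measure lebesgue V"
  obtain e where e: "e > 0" "measure lebesgue (thickening V e) \<le> ?\<mu> + \<delta> * ?c"
    "?\<mu> - \<delta> * ?c \<le> measure lebesgue (erosion V e)"
    using measure_thickening_erosion_approx[OF assms, of "\<delta> * ?c"] \<open>\<delta> > 0\<close> covolume_pos by auto
  obtain F R where F: "fundamental_domain L F" "measure lebesgue F = ?c"
    "\<And>q. q \<in> F \<Longrightarrow> norm (fst q) \<le> R \<and> norm (snd q) < e"
    using e(1) by (rule thin_fundamental_domainE) blast
  define lo where "lo r = measure lebesgue (ball s (r + (a - R))) / ?v r * (measure lebesgue (erosion V e) / ?c)" for r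
  define up where "up r = measure lebesgue (ball s (r + (a + R))) / ?v r * (measure lebesgue (thickening V e) / ?c)" for r
  have "(lo \<longlongrightarrow> 1 * (measure lebesgue (erosion V e) / ?c)) at_top"
    unfolding lo_def by (intro tendsto_mult tendsto_measure_ball_ratio tendsto_const)
  moreover have "(up \<longlongrightarrow> 1 * (measure lebesgue (thickening V e) / ?c)) at_top"
    unfolding up_def by (intro tendsto_mult tendsto_measure_ball_ratio tendsto_const)
  moreover have "?\<mu> / ?c - \<delta> \<le> measure lebesgue (erosion V e) / ?c"
    "measure lebesgue (thickening V e) / ?c \<le> ?\<mu> / ?c + \<delta>"
    using divide_right_mono[OF e(3), of ?c] divide_right_mono[OF e(2), of ?c] covolume_pos
    by (simp_all add: diff_divide_distrib add_divide_distrib)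
  moreover have "eventually (\<lambda>r. lo r \<le> card (L \<inter> ball s (r + a) \<times> V) / ?v r \<and>
      card (L \<inter> ball s (r + a) \<times> V) / ?v r \<le> up r) at_top"
    using eventually_gt_at_top[of 0]
  proof eventually_elim
    case (elim r)
    then have "?v r > 0" by simp
    from card_window_points_ratio_bounds[OF F assms(1) this, of s "r + a"] show ?case
      by (simp add: lo_def up_def add_diff_eq add.assoc)
  qed
  ultimately show "\<exists>lo up x y. (lo \<longlongrightarrow> x) at_top \<and> (up \<longlongrightarrow> y) at_top \<and>
      ?\<mu> / ?c - \<delta> \<le> x \<and> y \<le> ?\<mu> / ?c + \<delta> \<and>
      eventually (\<lambda>r. lo r \<le> card (L \<inter> ball s (r + a) \<times> V) / ?v r \<and>
        card (L \<inter> ball s (r + a) \<times> V) / ?v r \<le> up r) at_top"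
    by auto
qed

lemma star_map_fst: "l \<in> L \<Longrightarrow> star_map L (fst l) = snd l"
  unfolding star_map_def using the_inv_into_f_f[OF inj_on_fst] by simp

lemma cp_set_eq: "cp_set L W = fst ` (L \<inter> UNIV \<times> W)"
proof (intro equalityI subsetI)
  fix x assume "x \<in> cp_set L W"
  then obtain l where "l \<in> L" "x = fst l" "star_map L x \<in> W" by (auto simp: cp_set_def)
  then show "x \<in> fst ` (L \<inter> UNIV \<times> W)"
    using star_map_fst by (auto simp: mem_Times_iff)
next
  fix x assume "x \<in> fst ` (L \<inter> UNIV \<times> W)"
  then obtain l where "l \<in> L" "snd l \<in> W" "x = fst l" by (auto simp: mem_Times_iff)
  then show "x \<in> cp_set L W"
    using star_map_fst by (auto simp: cp_set_def)
qed

lemma model_set_Int_ball: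
  "(+) t ` cp_set L W \<inter> ball 0 r = (\<lambda>l. t + fst l) ` (L \<inter> ball (- t) r \<times> W)"
proof -
  have "dist (- t) x = dist 0 (t + x)" for x
    by (simp add: dist_norm norm_minus_commute add.commute)
  then have "(\<lambda>l. t + fst l) ` (L \<inter> UNIV \<times> W) \<inter> ball 0 r = (\<lambda>l. t + fst l) ` (L \<inter> ball (- t) r \<times> W)"
    by (auto simp: mem_Times_iff)
  then show ?thesis
    by (simp add: cp_set_eq image_image)
qed

lemma autocorr_approx_model_set:
  assumes "bounded W" "finite D"
    and D: "\<And>d. d \<in> L \<Longrightarrow> f (fst d) \<noteq> 0 \<Longrightarrow> snd d \<in> {a - b | a b. a \<in> W \<and> b \<in> W} \<Longrightarrow> d \<in> D"
  shows "autocorr_approx ((+) t ` cp_set L W) r f =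
    (\<Sum>d\<in>D. f (fst d) * card {l \<in> L \<inter> ball (- t) r \<times> W. l - d \<in> L \<inter> ball (- t) r \<times> W})
      / measure lebesgue (ball (0::'a) r)"
proof -
  let ?S = "L \<inter> ball (- t) r \<times> W"
  have fin: "finite ?S"
    using assms(1) by (intro finite_lattice_Int_bounded lattice bounded_Times bounded_ball)
  have inj: "inj_on (\<lambda>l. t + fst l) ?S"
    using inj_on_fst by (auto simp: inj_on_def)
  have "(\<Sum>x\<in>(+) t ` cp_set L W \<inter> ball 0 r. \<Sum>y\<in>(+) t ` cp_set L W \<inter> ball 0 r. f (x - y)) =
      (\<Sum>l\<in>?S. \<Sum>l'\<in>?S. f (fst (l - l')))"
    unfolding model_set_Int_ball by (simp add: sum.reindex[OF inj])
  also have "\<dots> = (\<Sum>d\<in>D. f (fst d) * card {l\<in>?S. l - d \<in> ?S})"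
  proof (rule sum_sum_diff_eq_sum_card[OF fin assms(2)])
    fix l l' assume "l \<in> ?S" "l' \<in> ?S" "f (fst (l - l')) \<noteq> 0"
    then show "l - l' \<in> D"
      by (intro D) (auto simp: lattice_diff[OF lattice] mem_Times_iff)
  qed
  finally show ?thesis by (simp add: autocorr_approx_def)
qed

lemma tendsto_card_difference_points:
  assumes "compact W" "negligible (frontier W)" "d \<in> L"
  shows "((\<lambda>r. card {l \<in> L \<inter> ball (- t) r \<times> W. l - d \<in> L \<inter> ball (- t) r \<times> W}
      / measure lebesgue (ball (0::'a) r)) \<longlongrightarrow> covariogram W (snd d) / covolume) at_top"
proof -
  let ?A = "\<lambda>r. {l \<in> L \<inter> ball (- t) r \<times> W. l - d \<in> L \<inter> ball (- t) r \<times> W}"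
  let ?v = "\<lambda>r. measure lebesgue (ball (0::'a) r)"
  define V where "V = W \<inter> (+) (snd d) ` W"
  have V: "bounded V" "negligible (frontier V)"
    using assms by (auto simp: V_def intro: negligible_frontier_Int_translation compact_imp_bounded)
  have lower: "L \<inter> ball (- t) (r + - norm (fst d)) \<times> V \<subseteq> ?A r" for r
  proof
    fix l assume l: "l \<in> L \<inter> ball (- t) (r + - norm (fst d)) \<times> V"
    have "dist (- t) (fst l - fst d) \<le> dist (- t) (fst l) + norm (fst d)"
      using dist_triangle[of "- t" "fst l - fst d" "fst l"] by (simp add: dist_norm)
    moreover have "dist (- t) (fst l) < r + - norm (fst d)"
      using l by (simp add: mem_Times_iff)
    ultimately have "dist (- t) (fst l) < r" "dist (- t) (fst l - fst d) < r"
      using norm_ge_zero[of "fst d"] by linarith+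
    then show "l \<in> ?A r"
      using l lattice_diff[OF lattice _ assms(3)] by (auto simp: V_def mem_Times_iff in_translation_iff)
  qed
  have upper: "?A r \<subseteq> L \<inter> ball (- t) (r + 0) \<times> V" for r
    by (auto simp: V_def mem_Times_iff in_translation_iff)
  have fin: "finite (L \<inter> ball (- t) (r + 0) \<times> V)" for r
    using V(1) by (intro finite_lattice_Int_bounded lattice bounded_Times bounded_ball)
  have "((\<lambda>r. card (?A r) / ?v r) \<longlongrightarrow> measure lebesgue V / covolume) at_top"
  proof (rule tendsto_sandwich[OF _ _ tendsto_card_window_points[OF V] tendsto_card_window_points[OF V]])
    show "eventually (\<lambda>r. card (L \<inter> ball (- t) (r + - norm (fst d)) \<times> V) / ?v r \<le> card (?A r) / ?v r) at_top"
      using card_mono[OF finite_subset[OF upper fin] lower] by (intro always_eventually allI divide_right_mono) auto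
    show "eventually (\<lambda>r. card (?A r) / ?v r \<le> card (L \<inter> ball (- t) (r + 0) \<times> V) / ?v r) at_top"
      using card_mono[OF fin upper] by (intro always_eventually allI divide_right_mono) auto
  qed
  then show ?thesis by (simp add: V_def covariogram_def)
qed

text \<open>For \<open>f \<in> Cc\<close> the index set is finite, because \<open>covariogram W\<close> vanishes outside \<open>W - W\<close>.\<close>
definition window_autocorrelation :: "'b set \<Rightarrow> ('a \<Rightarrow> real) \<Rightarrow> real" where
  "window_autocorrelation W f =
     (\<Sum>d\<in>{d\<in>L. f (fst d) \<noteq> 0 \<and> covariogram W (snd d) \<noteq> 0}. f (fst d) * covariogram W (snd d)) / covolume"

lemma has_autocorrelation_model_set:
  assumes "compact W" "negligible (frontier W)"
  shows "has_autocorrelation ((+) t ` cp_set L W) (window_autocorrelation W)"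
  unfolding has_autocorrelation_def
proof
  fix f :: "'a \<Rightarrow> real" assume "f \<in> Cc"
  let ?W = "{a - b | a b. a \<in> W \<and> b \<in> W}"
  let ?A = "\<lambda>d r. {l \<in> L \<inter> ball (- t) r \<times> W. l - d \<in> L \<inter> ball (- t) r \<times> W}"
  define D where "D = L \<inter> closure {x. f x \<noteq> 0} \<times> ?W"
  have "finite D"
    using \<open>f \<in> Cc\<close> compact_differences[OF assms(1,1)] unfolding D_def Cc_def
    by (intro finite_lattice_Int_bounded lattice bounded_Times compact_imp_bounded) auto
  have D: "d \<in> D" if "d \<in> L" "f (fst d) \<noteq> 0" "snd d \<in> ?W" for d
    using that closure_subset by (force simp: D_def mem_Times_iff)
  have "autocorr_approx ((+) t ` cp_set L W) r f =
      (\<Sum>d\<in>D. f (fst d) * (card (?A d r) / measure lebesgue (ball (0::'a) r)))" for r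
    using autocorr_approx_model_set[OF compact_imp_bounded[OF assms(1)] \<open>finite D\<close> D]
    by (simp add: sum_divide_distrib)
  moreover have "((\<lambda>r. \<Sum>d\<in>D. f (fst d) * (card (?A d r) / measure lebesgue (ball (0::'a) r)))
      \<longlongrightarrow> (\<Sum>d\<in>D. f (fst d) * (covariogram W (snd d) / covolume))) at_top"
    using tendsto_card_difference_points[OF assms] by (intro tendsto_sum tendsto_mult_left) (auto simp: D_def)
  moreover have "(\<Sum>d\<in>D. f (fst d) * (covariogram W (snd d) / covolume)) = window_autocorrelation W f"
  proof -
    have "{d\<in>L. f (fst d) \<noteq> 0 \<and> covariogram W (snd d) \<noteq> 0} \<subseteq> D"
      using D covariogram_nonzero_imp_diff by blast
    then have "(\<Sum>d\<in>{d\<in>L. f (fst d) \<noteq> 0 \<and> covariogram W (snd d) \<noteq> 0}. f (fst d) * covariogram W (snd d))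
        = (\<Sum>d\<in>D. f (fst d) * covariogram W (snd d))"
      using \<open>finite D\<close> by (intro sum.mono_neutral_left) (auto simp: D_def)
    then show ?thesis
      unfolding window_autocorrelation_def by (simp add: sum_divide_distrib)
  qed
  ultimately show "((\<lambda>r. autocorr_approx ((+) t ` cp_set L W) r f) \<longlongrightarrow> window_autocorrelation W f) at_top"
    by simp
qed

lemma lattice_point_bump:
  assumes "l0 \<in> L" "bounded K"
  obtains f where "f \<in> Cc" "f (fst l0) = 1"
    "\<And>d. d \<in> L \<Longrightarrow> snd d \<in> K \<Longrightarrow> f (fst d) \<noteq> 0 \<Longrightarrow> d = l0"
proof -
  define E where "E = L \<inter> cball (fst l0) 1 \<times> K"
  have "finite E"
    unfolding E_def using assms(2) by (intro finite_lattice_Int_bounded lattice bounded_Times bounded_cball)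
  then obtain \<delta>0 where "\<delta>0 > 0" "\<forall>x\<in>fst ` E. x \<noteq> fst l0 \<longrightarrow> \<delta>0 \<le> dist (fst l0) x"
    using finite_set_avoid[of "fst ` E" "fst l0"] by blast
  then obtain \<delta> where \<delta>: "\<delta> > 0" "\<delta> \<le> 1" "\<And>x. x \<in> fst ` E \<Longrightarrow> x \<noteq> fst l0 \<Longrightarrow> \<delta> \<le> dist (fst l0) x"
    by (intro that[of "min \<delta>0 1"]) auto
  define f where "f x = max 0 (1 - dist x (fst l0) / \<delta>)" for x
  have support: "{x. f x \<noteq> 0} \<subseteq> ball (fst l0) \<delta>"
    using \<delta>(1) by (auto simp: f_def dist_commute max_def field_simps split: if_splits)
  have "f \<in> Cc"
    unfolding Cc_def f_def using bounded_subset[OF bounded_ball support]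
    by (auto intro!: continuous_intros simp: compact_closure f_def)
  moreover have "f (fst l0) = 1" by (simp add: f_def)
  moreover have "d = l0" if d: "d \<in> L" "snd d \<in> K" "f (fst d) \<noteq> 0" for d
  proof -
    have "dist (fst l0) (fst d) < \<delta>" using support d(3) by (auto simp: dist_commute)
    then have "d \<in> E" using d(1,2) \<delta>(2) by (auto simp: E_def mem_Times_iff)
    then have "fst d = fst l0" using \<delta>(3) \<open>dist (fst l0) (fst d) < \<delta>\<close> by force
    then show "d = l0" using inj_on_fst d(1) assms(1) by (auto simp: inj_on_def)
  qed
  ultimately show ?thesis using that by blast
qed

lemma window_autocorrelation_single_point:
  assumes "l0 \<in> L" "\<And>d. d \<in> L \<Longrightarrow> f (fst d) \<noteq> 0 \<Longrightarrow> covariogram W (snd d) \<noteq> 0 \<Longrightarrow> d = l0"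
  shows "window_autocorrelation W f = f (fst l0) * covariogram W (snd l0) / covolume"
proof -
  have "(\<Sum>d\<in>{d\<in>L. f (fst d) \<noteq> 0 \<and> covariogram W (snd d) \<noteq> 0}. f (fst d) * covariogram W (snd d)) =
      (\<Sum>d\<in>{l0}. f (fst d) * covariogram W (snd d))"
    using assms by (intro sum.mono_neutral_left) auto
  then show ?thesis by (simp add: window_autocorrelation_def)
qed

lemma covariogram_eq_if_window_autocorrelation_eq:
  assumes W: "compact W" "negligible (frontier W)" and W': "compact W'" "negligible (frontier W')"
    and eq: "\<And>f. f \<in> Cc \<Longrightarrow> window_autocorrelation W f = window_autocorrelation W' f"
  shows "covariogram W = covariogram W'"
proof -
  let ?K = "{a - b | a b. a \<in> W \<and> b \<in> W} \<union> {a - b | a b. a \<in> W' \<and> b \<in> W'}"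
  have "bounded ?K"
    using compact_differences[OF W(1) W(1)] compact_differences[OF W'(1) W'(1)]
    by (auto intro: compact_imp_bounded)
  have on_lattice: "covariogram W (snd l) - covariogram W' (snd l) = 0" if l: "l \<in> L" for l
  proof -
    obtain f where f: "f \<in> Cc" "f (fst l) = 1" "\<And>d. d \<in> L \<Longrightarrow> snd d \<in> ?K \<Longrightarrow> f (fst d) \<noteq> 0 \<Longrightarrow> d = l"
      using lattice_point_bump[OF l \<open>bounded ?K\<close>] by blast
    have "window_autocorrelation G f = covariogram G (snd l) / covolume" if G: "G = W \<or> G = W'" for G
    proof -
      have "d = l" if "d \<in> L" "f (fst d) \<noteq> 0" "covariogram G (snd d) \<noteq> 0" for d
        using f(3)[OF that(1) _ that(2)] covariogram_nonzero_imp_diff[OF that(3)] G by blast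
      then show ?thesis using window_autocorrelation_single_point[OF l] f(2) by simp
    qed
    then show ?thesis using eq[OF f(1)] covolume_pos by auto
  qed
  have "continuous_on (closure (snd ` L)) (\<lambda>y. covariogram W y - covariogram W' y)"
    using continuous_covariogram[OF W] continuous_covariogram[OF W'] dense_internal
    by (intro continuous_intros) auto
  then have "covariogram W y - covariogram W' y = 0" for y
    by (rule continuous_constant_on_closure) (use on_lattice dense_internal in auto)
  then show ?thesis by auto
qed

end

theorem theorem1:
  fixes L :: "('a::euclidean_space \<times> 'b::euclidean_space) set"
    and W W' :: "'b set" and t t' :: 'a
  assumes "cut_project_scheme L"
    and "window W" and "window W'"
  shows "homometric ((+) t ` cp_set L W) ((+) t' ` cp_set L W') \<longleftrightarrow>
         (\<forall>y. covariogram W y = covariogram W' y)"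
proof -
  interpret cut_and_project L by standard fact
  have W: "compact W" "negligible (frontier W)" and W': "compact W'" "negligible (frontier W')"
    using assms(2,3) by (auto simp: window_def negligible_iff_null_sets)
  have "homometric ((+) t ` cp_set L W) ((+) t' ` cp_set L W') \<longleftrightarrow>
      (\<forall>f\<in>Cc. window_autocorrelation W f = window_autocorrelation W' f)"
    by (intro homometric_iff_autocorrelations_eq has_autocorrelation_model_set W W')
  also have "\<dots> \<longleftrightarrow> covariogram W = covariogram W'"
    using covariogram_eq_if_window_autocorrelation_eq[OF W W'] by (auto simp: window_autocorrelation_def)
  finally show ?thesis by (simp add: fun_eq_iff)
qed

end
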